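(* Let $C:\mathbb{R}^n\to\mathbb{R}$ be convex, increasing, and $\mathbf{1}$-invariant with $C(\mathbf{0})>0$, and suppose additionally $\{\mathbf{q} \mid C(\mathbf{q})=0\} \subseteq \mathbb{R}^n_{<0}$. Define $\varphi:\mathbb{R}^n_{>0}\to\mathbb{R}$ by $\varphi(\mathbf{q})=\alpha$ where $\alpha>0$ satisfies $C(-\mathbf{q}/\alpha)=0$. Then $\varphi$ defines a CFMM satisfying Liquidation, NoDominatedTrades, PathIndependence, DemandResponsiveness, and BoundedReserves.
   Context: There are $n$ assets. A trade $\mathbf{r}\in\mathbb{R}^n$ gives $r_i$ net units of asset $i$ to the market maker. A history $h$ is an ordered list of trades; $\epsilon=()$ is the empty history, $h\oplus\mathbf{r}$ appends $\mathbf{r}$. The first entry of a history is the initial reserves and $\mathbf{q}_h=\mathsf{sum}(h)$ is the current reserves. A market maker is a map $h\mapsto\mathsf{ValTrades}(h)\subseteq\mathbb{R}^n$; $\mathsf{ValTrades}(\epsilon)$ is the set of allowed initial reserves; $\mathsf{ValHist}(\epsilon)$ is the set of nonempty histories reachable by appending valid trades. $\mathbf{1}$ is the all-ones vector. Componentwise order: $\mathbf{x}\succeq\mathbf{y}$ iff $x_i\ge y_i$ for all $i$; $\mathbf{x}\succ\mathbf{y}$ iff $x_i>y_i$ for all $i$; $\mathbb{R}^n_{>0}=\{\mathbf{q}\succ\mathbf{0}\}$, $\mathbb{R}^n_{<0}=\{\mathbf{q}\prec\mathbf{0}\}$. $C$ is increasing if $C(\mathbf{x})>C(\mathbf{y})$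 whenever $\mathbf{x}\succeq\mathbf{y}$, $\mathbf{x}\neq\mathbf{y}$; $\mathbf{1}$-invariant if $C(\mathbf{q}+a\mathbf{1})=C(\mathbf{q})+a$. The map $\varphi$ is well defined (the root $\alpha$ exists and is unique). A CFMM with potential $\varphi$ has $\mathsf{ValTrades}(h)=\{\mathbf{r}\mid\varphi(\mathbf{q}_h+\mathbf{r})=\varphi(\mathbf{q}_h)\}$, with $\mathsf{ValTrades}(\epsilon)=\mathbb{R}^n_{>0}$. Axioms: NoDominatedTrades: for all $h\in\mathsf{ValHist}(\epsilon)$, no $\mathbf{r},\mathbf{r}'\in\mathsf{ValTrades}(h)$ with $\mathbf{r}'\succeq\mathbf{r}$, $\mathbf{r}'\neq\mathbf{r}$. PathIndependence: $\mathbf{r}\in\mathsf{ValTrades}(h)$ and $\mathbf{r}'\in\mathsf{ValTrades}(h\oplus\mathbf{r})$ imply $\mathbf{r}+\mathbf{r}'\in\mathsf{ValTrades}(h)$. Liquidation: for all $h\in\mathsf{ValHist}(\epsilon)$ and all $\mathbf{r},\mathbf{r}'\succeq\mathbf{0}$ with $\mathbf{r}\neq\mathbf{0}\neq\mathbf{r}'$, there is $\beta\ge0$ with $\mathbf{r}-\beta\mathbf{r}'\in\mathsf{ValTrades}(h)$. DemandResponsiveness: if $\mathbf{r}-\mathbf{r}'\in\mathsf{ValTrades}(h)$ with $\mathbf{r},\mathbf{r}'\succeq\mathbf{0}$ and $\alpha\mathbf{r}-\beta\mathbf{r}'\in\mathsf{ValTrades}(h\oplus(\mathbf{r}-\mathbf{r}'))$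 for some $\alpha,\beta>0$, then $\beta\le\alpha$. BoundedReserves: $\mathbb{R}^n_{>0}\subseteq\mathsf{ValTrades}(\epsilon)$ and $\mathbf{q}_h\succeq\mathbf{0}$ for all $h\in\mathsf{ValHist}(\epsilon)$. *)

theory Defs
  imports "HOL-Analysis.Analysis"
begin

text \<open>Assets are indexed by a finite type 'n; vectors live in real^'n.
  A history is a list of trades (first entry = initial reserves), the empty
  history is [], and appending a trade r to h is h @ [r].\<close>

definition vge :: "real^'n \<Rightarrow> real^'n \<Rightarrow> bool" where
  "vge x y \<longleftrightarrow> (\<forall>i. y $ i \<le> x $ i)"

definition pos_orthant :: "(real^'n) set" where
  "pos_orthant = {q. \<forall>i. 0 < q $ i}"

definition neg_orthant :: "(real^'n) set" where
  "neg_orthant = {q. \<forall>i. q $ i < 0}"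

definition increasing_fn :: "(real^'n \<Rightarrow> real) \<Rightarrow> bool" where
  "increasing_fn C \<longleftrightarrow> (\<forall>x y. vge x y \<and> x \<noteq> y \<longrightarrow> C y < C x)"

definition one_invariant :: "(real^'n \<Rightarrow> real) \<Rightarrow> bool" where
  "one_invariant C \<longleftrightarrow> (\<forall>q a. C (q + a *\<^sub>R vec 1) = C q + a)"

definition reserves :: "(real^'n) list \<Rightarrow> real^'n" where
  "reserves h = sum_list h"

inductive_set valhist :: "((real^'n) list \<Rightarrow> (real^'n) set) \<Rightarrow> ((real^'n) list) set"
  for VT :: "(real^'n) list \<Rightarrow> (real^'n) set" where
  init: "r \<in> VT [] \<Longrightarrow> [r] \<in> valhist VT"
| step: "h \<in> valhist VT \<Longrightarrow> r \<in> VT h \<Longrightarrow> h @ [r] \<in> valhist VT"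

text \<open>phi(q) = the alpha > 0 with C(-q/alpha) = 0 (meaningful on the positive orthant).\<close>
definition potential :: "(real^'n \<Rightarrow> real) \<Rightarrow> real^'n \<Rightarrow> real" where
  "potential C q = (THE \<alpha>. 0 < \<alpha> \<and> C (- (inverse \<alpha> *\<^sub>R q)) = 0)"

definition cfmm :: "(real^'n \<Rightarrow> real) \<Rightarrow> (real^'n) list \<Rightarrow> (real^'n) set" where
  "cfmm phi h = (if h = [] then pos_orthant
     else {r. reserves h + r \<in> pos_orthant \<and> phi (reserves h + r) = phi (reserves h)})"

definition NoDominatedTrades :: "((real^'n) list \<Rightarrow> (real^'n) set) \<Rightarrow> bool" where
  "NoDominatedTrades VT \<longleftrightarrow>
     (\<forall>h \<in> valhist VT. \<not> (\<exists>r r'. r \<in> VT h \<and> r' \<in> VT h \<and> vge r' r \<and> r' \<noteq> r))"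

definition PathIndependence :: "((real^'n) list \<Rightarrow> (real^'n) set) \<Rightarrow> bool" where
  "PathIndependence VT \<longleftrightarrow>
     (\<forall>h r r'. r \<in> VT h \<longrightarrow> r' \<in> VT (h @ [r]) \<longrightarrow> r + r' \<in> VT h)"

definition Liquidation :: "((real^'n) list \<Rightarrow> (real^'n) set) \<Rightarrow> bool" where
  "Liquidation VT \<longleftrightarrow>
     (\<forall>h \<in> valhist VT. \<forall>r r'. vge r 0 \<and> vge r' 0 \<and> r \<noteq> 0 \<and> r' \<noteq> 0 \<longrightarrow>
        (\<exists>\<beta>\<ge>0. r - \<beta> *\<^sub>R r' \<in> VT h))"

definition DemandResponsiveness :: "((real^'n) list \<Rightarrow> (real^'n) set) \<Rightarrow> bool" where
  "DemandResponsiveness VT \<longleftrightarrow>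
     (\<forall>h \<in> valhist VT. \<forall>r r' \<alpha> \<beta>.
        vge r 0 \<and> vge r' 0 \<and> r \<noteq> 0 \<and> r' \<noteq> 0 \<and> r - r' \<in> VT h \<and> 0 < \<alpha> \<and> 0 < \<beta> \<and>
        \<alpha> *\<^sub>R r - \<beta> *\<^sub>R r' \<in> VT (h @ [r - r']) \<longrightarrow> \<beta> \<le> \<alpha>)"

definition BoundedReserves :: "((real^'n) list \<Rightarrow> (real^'n) set) \<Rightarrow> bool" where
  "BoundedReserves VT \<longleftrightarrow>
     pos_orthant \<subseteq> VT [] \<and> (\<forall>h \<in> valhist VT. vge (reserves h) 0)"

end

(* Along a ray t \<mapsto> -t q with q > 0 the increasing function C falls strictly from C 0 > 0
   and, by 1-invariance, becomes negative, so \<phi>(q) is well defined; a trade r at reserves q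
   is valid exactly when q + r lies on the level set {x > 0. C (-x/\<phi>(q)) = 0}.
   Strict monotonicity of C makes this level set an antichain (NoDominatedTrades).
   Convexity of C makes each set {x. C (-x/\<phi>) \<le> 0} convex; if the second trade
   \<alpha> r - \<beta> r' had \<beta> > \<alpha>, a convex combination of the reserves before the first and after
   the second trade would lie strictly below the level point reached in between
   (DemandResponsiveness). For Liquidation follow q + r - s r' from s = 0, where C (-x/\<phi>(q))
   is negative, until a coordinate vanishes, where it is positive because the zero set of C
   lies in the negative orthant; the intermediate value theorem yields a root in between. *)

theory Submission
  imports Defs
begin

lemma valhist_nonempty: "h \<in> valhist VT \<Longrightarrow> h \<noteq> []"
  by (induction rule: valhist.induct) auto

lemma reserves_Nil [simp]: "reserves [] = 0"
  by (simp add: reserves_def)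

lemma reserves_snoc [simp]: "reserves (h @ [r]) = reserves h + r"
  by (simp add: reserves_def)

lemma valhist_cfmm_reserves_pos:
  "h \<in> valhist (cfmm phi) \<Longrightarrow> reserves h \<in> pos_orthant"
proof (induction rule: valhist.induct)
  case (init r)
  then show ?case by (simp add: cfmm_def reserves_def)
next
  case (step h r)
  then show ?case using valhist_nonempty[OF step.hyps(1)] by (simp add: cfmm_def)
qed

lemma PathIndependence_cfmm: "PathIndependence (cfmm phi)"
  unfolding PathIndependence_def cfmm_def by (auto simp: add.assoc)

lemma BoundedReserves_cfmm: "BoundedReserves (cfmm phi)"
  using valhist_cfmm_reserves_pos
  by (fastforce simp: BoundedReserves_def cfmm_def pos_orthant_def vge_def less_imp_le)

lemma pos_orthant_exit_time:
  fixes p d :: "real^'n"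
  assumes p: "p \<in> pos_orthant" and d: "vge d 0" "d \<noteq> 0"
  obtains b i where "0 < b" "\<And>\<beta>. 0 \<le> \<beta> \<Longrightarrow> \<beta> < b \<Longrightarrow> p - \<beta> *\<^sub>R d \<in> pos_orthant"
    "(p - b *\<^sub>R d) $ i = 0"
proof -
  define I where "I = {i. 0 < d $ i}"
  define b where "b = Min ((\<lambda>i. p $ i / d $ i) ` I)"
  have "I \<noteq> {}"
    using d by (force simp: I_def vge_def vec_eq_iff order_less_le)
  then have "b \<in> (\<lambda>i. p $ i / d $ i) ` I"
    unfolding b_def by (intro Min_in) auto
  then obtain i where i: "i \<in> I" "b = p $ i / d $ i"
    by blast
  have b_le: "b \<le> p $ j / d $ j" if "j \<in> I" for j
    using that by (simp add: b_def)
  show ?thesis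
  proof
    show "0 < b"
      using i p by (simp add: I_def pos_orthant_def)
    show "(p - b *\<^sub>R d) $ i = 0"
      using i by (simp add: I_def)
    fix \<beta> :: real
    assume \<beta>: "0 \<le> \<beta>" "\<beta> < b"
    have "\<beta> * d $ j < p $ j" for j
    proof (cases "j \<in> I")
      case True
      with b_le \<beta> have "\<beta> < p $ j / d $ j" by fastforce
      with True show ?thesis by (simp add: I_def pos_less_divide_eq)
    next
      case False
      moreover have "0 \<le> d $ j"
        using d(1) by (simp add: vge_def)
      ultimately have "d $ j = 0" by (simp add: I_def)
      with p show ?thesis by (simp add: pos_orthant_def)
    qed
    then show "p - \<beta> *\<^sub>R d \<in> pos_orthant"
      by (simp add: pos_orthant_def)
  qed
qed

lemma one_invariant_pos_if_component_nonneg: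
  assumes inv: "one_invariant C" and zeros: "{q. C q = 0} \<subseteq> neg_orthant"
    and x: "0 \<le> x $ i"
  shows "0 < C x"
proof (rule ccontr)
  assume "\<not> 0 < C x"
  have "C (x - C x *\<^sub>R vec 1) = 0"
    using inv[unfolded one_invariant_def, rule_format, of x "- C x"] by simp
  with zeros have "(x - C x *\<^sub>R vec 1) $ i < 0"
    by (auto simp: neg_orthant_def)
  with x \<open>\<not> 0 < C x\<close> show False by simp
qed

lemma pos_orthant_nonzero: "q \<in> pos_orthant \<Longrightarrow> q \<noteq> 0"
  by (auto simp: pos_orthant_def)

lemma vge_scaleR: "0 \<le> c \<Longrightarrow> vge x y \<Longrightarrow> vge (c *\<^sub>R x) (c *\<^sub>R y)"
  by (simp add: vge_def mult_left_mono)

locale cost_function =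
  fixes C :: "real^'n \<Rightarrow> real"
  assumes convex: "convex_on UNIV C"
    and increasing: "increasing_fn C"
    and invariant: "one_invariant C"
    and pos_at_zero: "0 < C 0"
begin

lemma continuous_on_UNIV: "continuous_on UNIV C"
  using convex_on_continuous[OF open_UNIV convex] .

lemma strict_mono_vge: "vge x y \<Longrightarrow> x \<noteq> y \<Longrightarrow> C y < C x"
  using increasing by (simp add: increasing_fn_def)

lemma mono_vge: "vge x y \<Longrightarrow> C y \<le> C x"
  using strict_mono_vge by (cases "x = y") (auto simp: less_imp_le)

lemma level_strict_antimono:
  assumes "0 < \<alpha>" "vge x y" "x \<noteq> y"
  shows "C (- (inverse \<alpha> *\<^sub>R x)) < C (- (inverse \<alpha> *\<^sub>R y))"
proof (rule strict_mono_vge)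
  show "vge (- (inverse \<alpha> *\<^sub>R y)) (- (inverse \<alpha> *\<^sub>R x))"
    using vge_scaleR[of "inverse \<alpha>", OF _ assms(2)] assms(1) by (simp add: vge_def)
  show "- (inverse \<alpha> *\<^sub>R y) \<noteq> - (inverse \<alpha> *\<^sub>R x)"
    using assms(1,3) by simp
qed

lemma ray_strict_antimono:
  assumes "q \<in> pos_orthant" "s < t"
  shows "C (- (t *\<^sub>R q)) < C (- (s *\<^sub>R q))"
proof (rule strict_mono_vge)
  show "vge (- (s *\<^sub>R q)) (- (t *\<^sub>R q))"
    using assms by (simp add: vge_def pos_orthant_def mult_right_mono less_imp_le)
  show "- (s *\<^sub>R q) \<noteq> - (t *\<^sub>R q)"
    using assms pos_orthant_nonzero by simp
qed

lemma root_on_ray_unique: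
  assumes q: "q \<in> pos_orthant"
    and "0 < a" "C (- (inverse a *\<^sub>R q)) = 0"
    and "0 < b" "C (- (inverse b *\<^sub>R q)) = 0"
  shows "a = b"
proof (rule ccontr)
  assume "a \<noteq> b"
  then have "inverse a < inverse b \<or> inverse b < inverse a"
    by (metis inverse_inverse_eq linorder_neq_iff)
  with ray_strict_antimono[OF q] assms(3,5) show False
    by fastforce
qed

lemma root_on_ray_exists:
  assumes q: "q \<in> pos_orthant"
  shows "\<exists>\<alpha>>0. C (- (inverse \<alpha> *\<^sub>R q)) = 0"
proof -
  define m where "m = Min (range (\<lambda>i. q $ i))"
  have m_le: "m \<le> q $ i" for i
    by (simp add: m_def)
  have "0 < m"
    using q by (simp add: m_def pos_orthant_def)
  define T where "T = C 0 / m"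
  have "0 < T"
    using pos_at_zero \<open>0 < m\<close> by (simp add: T_def)
  have "C (- (T *\<^sub>R q)) \<le> C (0 + (- (T * m)) *\<^sub>R vec 1)"
    using m_le \<open>0 < T\<close> by (intro mono_vge) (simp add: vge_def mult_left_mono)
  also have "\<dots> = C 0 - T * m"
    using invariant by (simp only: one_invariant_def)
  also have "\<dots> = 0"
    using \<open>0 < m\<close> by (simp add: T_def)
  finally have "C (- (T *\<^sub>R q)) \<le> 0" .
  moreover have "continuous_on {0..T} (\<lambda>t. C (- (t *\<^sub>R q)))"
    by (intro continuous_on_compose2[OF continuous_on_UNIV] continuous_intros) auto
  ultimately obtain t where t: "0 \<le> t" "t \<le> T" "C (- (t *\<^sub>R q)) = 0"
    using IVT2'[of "\<lambda>t. C (- (t *\<^sub>R q))" T 0 0] pos_at_zero \<open>0 < T\<close> by auto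
  with pos_at_zero have "0 < t"
    by (cases "t = 0") auto
  with t show ?thesis
    by (intro exI[of _ "inverse t"]) simp
qed

lemma ex1_root_on_ray:
  "q \<in> pos_orthant \<Longrightarrow> \<exists>!\<alpha>. 0 < \<alpha> \<and> C (- (inverse \<alpha> *\<^sub>R q)) = 0"
  using root_on_ray_exists root_on_ray_unique by blast

lemma potential_root:
  "q \<in> pos_orthant \<Longrightarrow> 0 < potential C q \<and> C (- (inverse (potential C q) *\<^sub>R q)) = 0"
  unfolding potential_def by (rule theI'[OF ex1_root_on_ray])

lemma potential_eq_iff:
  "q \<in> pos_orthant \<Longrightarrow> 0 < \<alpha> \<Longrightarrow> potential C q = \<alpha> \<longleftrightarrow> C (- (inverse \<alpha> *\<^sub>R q)) = 0"
  using potential_root root_on_ray_unique by blast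

lemma cfmm_potential_iff:
  assumes "h \<in> valhist (cfmm (potential C))"
  shows "r \<in> cfmm (potential C) h \<longleftrightarrow> reserves h + r \<in> pos_orthant \<and>
    C (- (inverse (potential C (reserves h)) *\<^sub>R (reserves h + r))) = 0"
  using valhist_nonempty[OF assms] valhist_cfmm_reserves_pos[OF assms]
    potential_eq_iff potential_root
  by (auto simp: cfmm_def)

lemma convex_neg_scaled_sublevel: "convex {x. C (- (c *\<^sub>R x)) \<le> 0}"
  unfolding convex_alt
proof (intro ballI allI impI, clarsimp)
  fix x y :: "real^'n" and u :: real
  assume "C (- (c *\<^sub>R x)) \<le> 0" "C (- (c *\<^sub>R y)) \<le> 0" "0 \<le> u" "u \<le> 1"
  have "C (- (c *\<^sub>R ((1 - u) *\<^sub>R x + u *\<^sub>R y)))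
      = C ((1 - u) *\<^sub>R (- (c *\<^sub>R x)) + u *\<^sub>R (- (c *\<^sub>R y)))"
    by (simp add: algebra_simps)
  also have "\<dots> \<le> (1 - u) * C (- (c *\<^sub>R x)) + u * C (- (c *\<^sub>R y))"
    using convex_onD[OF convex] \<open>0 \<le> u\<close> \<open>u \<le> 1\<close> by blast
  also have "\<dots> \<le> 0"
    using \<open>C (- (c *\<^sub>R x)) \<le> 0\<close> \<open>C (- (c *\<^sub>R y)) \<le> 0\<close> \<open>0 \<le> u\<close> \<open>u \<le> 1\<close>
    by (simp add: add_nonpos_nonpos mult_nonneg_nonpos)
  finally show "C (- (c *\<^sub>R ((1 - u) *\<^sub>R x + u *\<^sub>R y))) \<le> 0" .
qed

lemma NoDominatedTrades_cfmm_potential: "NoDominatedTrades (cfmm (potential C))"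
  unfolding NoDominatedTrades_def
proof (intro ballI notI, elim exE conjE)
  fix h r r'
  assume h: "h \<in> valhist (cfmm (potential C))"
    and r: "r \<in> cfmm (potential C) h" and r': "r' \<in> cfmm (potential C) h"
    and "vge r' r" "r' \<noteq> r"
  define q where "q = reserves h"
  have "0 < potential C q"
    using potential_root valhist_cfmm_reserves_pos[OF h] by (simp add: q_def)
  moreover have "vge (q + r') (q + r)" "q + r' \<noteq> q + r"
    using \<open>vge r' r\<close> \<open>r' \<noteq> r\<close> by (auto simp: vge_def)
  ultimately have "C (- (inverse (potential C q) *\<^sub>R (q + r')))
      < C (- (inverse (potential C q) *\<^sub>R (q + r)))"
    by (rule level_strict_antimono)
  with r r' show False
    by (simp add: cfmm_potential_iff[OF h] q_def)
qed

lemma DemandResponsiveness_cfmm_potential: "DemandResponsiveness (cfmm (potential C))"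
  unfolding DemandResponsiveness_def
proof (intro ballI allI impI, elim conjE)
  fix h r r' and a b :: real
  assume h: "h \<in> valhist (cfmm (potential C))"
    and "vge r' 0" "r' \<noteq> 0" and trade: "r - r' \<in> cfmm (potential C) h"
    and "0 < a" and trade': "a *\<^sub>R r - b *\<^sub>R r' \<in> cfmm (potential C) (h @ [r - r'])"
  define q where "q = reserves h"
  define x where "x = q + (r - r')"
  define D where "D = x + (a *\<^sub>R r - b *\<^sub>R r')"
  define \<alpha> where "\<alpha> = potential C q"
  have h': "h @ [r - r'] \<in> valhist (cfmm (potential C))"
    using h trade by (rule valhist.step)
  have "0 < \<alpha>" and q_root: "C (- (inverse \<alpha> *\<^sub>R q)) = 0"
    using potential_root valhist_cfmm_reserves_pos[OF h] by (simp_all add: \<alpha>_def q_def)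
  have "x \<in> pos_orthant" and x_root: "C (- (inverse \<alpha> *\<^sub>R x)) = 0"
    using trade by (simp_all add: cfmm_potential_iff[OF h] x_def q_def \<alpha>_def)
  then have "potential C x = \<alpha>"
    using \<open>0 < \<alpha>\<close> by (simp add: potential_eq_iff)
  with trade' have D_root: "C (- (inverse \<alpha> *\<^sub>R D)) = 0"
    by (simp add: cfmm_potential_iff[OF h'] D_def x_def q_def)
  show "b \<le> a"
  proof (rule ccontr)
    assume "\<not> b \<le> a"
    define t where "t = 1 / (1 + a)"
    define c where "c = (b - a) / (1 + a)"
    have "0 \<le> t" "t \<le> 1" "0 < c"
      using \<open>0 < a\<close> \<open>\<not> b \<le> a\<close> by (simp_all add: t_def c_def)
    have "(1 - t) *\<^sub>R q + t *\<^sub>R D = x - c *\<^sub>R r'"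
    proof -
      have "1 + a \<noteq> 0"
        using \<open>0 < a\<close> by simp
      then show ?thesis
        by (simp add: vec_eq_iff t_def c_def D_def x_def divide_simps) (simp add: algebra_simps)
    qed
    moreover have "(1 - t) *\<^sub>R q + t *\<^sub>R D \<in> {y. C (- (inverse \<alpha> *\<^sub>R y)) \<le> 0}"
      using convex_neg_scaled_sublevel[unfolded convex_alt] q_root D_root \<open>0 \<le> t\<close> \<open>t \<le> 1\<close>
      by simp
    ultimately have "C (- (inverse \<alpha> *\<^sub>R (x - c *\<^sub>R r'))) \<le> 0"
      by simp
    moreover have "vge x (x - c *\<^sub>R r')" "x \<noteq> x - c *\<^sub>R r'"
      using \<open>vge r' 0\<close> \<open>r' \<noteq> 0\<close> \<open>0 < c\<close> by (auto simp: vge_def)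
    ultimately show False
      using level_strict_antimono[OF \<open>0 < \<alpha>\<close>] x_root by fastforce
  qed
qed

lemma Liquidation_cfmm_potential:
  assumes zeros: "{q. C q = 0} \<subseteq> neg_orthant"
  shows "Liquidation (cfmm (potential C))"
  unfolding Liquidation_def
proof (intro ballI allI impI, elim conjE)
  fix h and r r' :: "real^'n"
  assume h: "h \<in> valhist (cfmm (potential C))"
    and "vge r 0" "vge r' 0" "r \<noteq> 0" "r' \<noteq> 0"
  define q where "q = reserves h"
  define \<alpha> where "\<alpha> = potential C q"
  define f where "f \<beta> = C (- (inverse \<alpha> *\<^sub>R (q + r - \<beta> *\<^sub>R r')))" for \<beta>
  have q: "q \<in> pos_orthant"
    using valhist_cfmm_reserves_pos[OF h] by (simp add: q_def)
  then have "0 < \<alpha>" "C (- (inverse \<alpha> *\<^sub>R q)) = 0"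
    using potential_root by (simp_all add: \<alpha>_def)
  have "q + r \<in> pos_orthant"
    using q \<open>vge r 0\<close> by (simp add: pos_orthant_def vge_def add_pos_nonneg)
  then obtain b i where "0 < b"
    and inside: "\<And>\<beta>. 0 \<le> \<beta> \<Longrightarrow> \<beta> < b \<Longrightarrow> q + r - \<beta> *\<^sub>R r' \<in> pos_orthant"
    and exit: "(q + r - b *\<^sub>R r') $ i = 0"
    using pos_orthant_exit_time \<open>vge r' 0\<close> \<open>r' \<noteq> 0\<close> by blast
  have "vge (q + r) q" "q + r \<noteq> q"
    using \<open>vge r 0\<close> \<open>r \<noteq> 0\<close> by (auto simp: vge_def)
  then have "f 0 < 0"
    using level_strict_antimono[OF \<open>0 < \<alpha>\<close>] \<open>C (- (inverse \<alpha> *\<^sub>R q)) = 0\<close>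
    by (fastforce simp: f_def)
  moreover have "0 < f b"
    unfolding f_def using exit
    by (intro one_invariant_pos_if_component_nonneg[OF invariant zeros, of _ i]) simp
  moreover have "continuous_on {0..b} f"
    unfolding f_def by (intro continuous_on_compose2[OF continuous_on_UNIV] continuous_intros) auto
  ultimately obtain \<beta> where "0 \<le> \<beta>" "\<beta> \<le> b" "f \<beta> = 0"
    using IVT'[of f 0 0 b] \<open>0 < b\<close> by force
  moreover from this have "\<beta> < b"
    using \<open>0 < f b\<close> by (cases "\<beta> = b") auto
  ultimately have "r - \<beta> *\<^sub>R r' \<in> cfmm (potential C) h"
    using inside by (simp add: cfmm_potential_iff[OF h] f_def algebra_simps flip: q_def \<alpha>_def)
  with \<open>0 \<le> \<beta>\<close> show "\<exists>\<beta>\<ge>0. r - \<beta> *\<^sub>R r' \<in> cfmm (potential C) h"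
    by blast
qed

end

theorem proposition4p5:
  fixes C :: "real^'n \<Rightarrow> real"
  assumes "convex_on UNIV C"
    and "increasing_fn C"
    and "one_invariant C"
    and "C 0 > 0"
    and "{q. C q = 0} \<subseteq> neg_orthant"
  shows "(\<forall>q \<in> pos_orthant. \<exists>!\<alpha>. 0 < \<alpha> \<and> C (- (inverse \<alpha> *\<^sub>R q)) = 0)
    \<and> Liquidation (cfmm (potential C))
    \<and> NoDominatedTrades (cfmm (potential C))
    \<and> PathIndependence (cfmm (potential C))
    \<and> DemandResponsiveness (cfmm (potential C))
    \<and> BoundedReserves (cfmm (potential C))"
proof -
  interpret cost_function C
    using assms(1-4) by unfold_locales
  show ?thesis
    using ex1_root_on_ray Liquidation_cfmm_potential[OF assms(5)]
      NoDominatedTrades_cfmm_potential PathIndependence_cfmm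
      DemandResponsiveness_cfmm_potential BoundedReserves_cfmm
    by blast
qed

end
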